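(* Let $n\ge2$ and let $P$ be a $2n$-gon in the plane whose sides are alternately horizontal and vertical (axis aligned), in general enough position that $T(P)$ is defined. Then $T(P)$ is again axis aligned; more precisely, if the $k$-th side of $P$ is vertical (resp. horizontal) then the $k$-th side of $T(P)$ is horizontal (resp. vertical).
   Context: For a polygon with vertices $V_1,\dots,V_m$ (indices mod $m$) in $\mathbb{RP}^2$, the $k$-th side is $V_kV_{k+1}$, and its projective normal $n_k$ is the line through the point $(V_{k-1}V_{k+1})\cap(V_kV_{k+2})$ and the point $(V_{k-1}V_k)\cap(V_{k+1}V_{k+2})$. $T(P)$ is the polygon whose vertices are $n_1\cap n_2, n_2\cap n_3,\dots$, so that its $k$-th side lies on the line $n_k$. Parallel lines are regarded as meeting at the corresponding point at infinity. *)

theory Defs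
  imports "HOL-Analysis.Analysis" "HOL-Analysis.Cross3"
begin

text \<open>Projective plane RP^2 via homogeneous coordinates in real^3 (nonzero vectors up to
scale). Both points and lines are homogeneous vectors; the line through two points and the
intersection point of two lines are both given by the cross product (a zero result means
"undefined"). Parallel lines meet at a point at infinity (third coordinate 0).\<close>

definition hom :: "real \<times> real \<Rightarrow> real^3" where
  "hom p = vector [fst p, snd p, 1]"

definition pjoin :: "real^3 \<Rightarrow> real^3 \<Rightarrow> real^3" where
  "pjoin p q = cross3 p q"

definition pmeet :: "real^3 \<Rightarrow> real^3 \<Rightarrow> real^3" where
  "pmeet l l' = cross3 l l'"

definition vtx :: "(nat \<Rightarrow> real \<times> real) \<Rightarrow> nat \<Rightarrow> nat \<Rightarrow> real^3" where
  "vtx V m k = hom (V (k mod m))"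

definition diag_point :: "(nat \<Rightarrow> real \<times> real) \<Rightarrow> nat \<Rightarrow> nat \<Rightarrow> real^3" where
  "diag_point V m k =
     pmeet (pjoin (vtx V m (k + m - 1)) (vtx V m (k + 1)))
           (pjoin (vtx V m k) (vtx V m (k + 2)))"

definition side_point :: "(nat \<Rightarrow> real \<times> real) \<Rightarrow> nat \<Rightarrow> nat \<Rightarrow> real^3" where
  "side_point V m k =
     pmeet (pjoin (vtx V m (k + m - 1)) (vtx V m k))
           (pjoin (vtx V m (k + 1)) (vtx V m (k + 2)))"

definition proj_normal :: "(nat \<Rightarrow> real \<times> real) \<Rightarrow> nat \<Rightarrow> nat \<Rightarrow> real^3" where
  "proj_normal V m k = pjoin (diag_point V m k) (side_point V m k)"

text \<open>Vertex of T(P) between its sides k and k+1: n_k \<inter> n_{k+1}.\<close>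

definition T_vertex :: "(nat \<Rightarrow> real \<times> real) \<Rightarrow> nat \<Rightarrow> nat \<Rightarrow> real^3" where
  "T_vertex V m k = pmeet (proj_normal V m (k mod m)) (proj_normal V m ((k + 1) mod m))"

text \<open>T(P) is defined (as a polygon in the plane): all lines and points in the construction
exist (the cross products are nonzero) and the vertices of T(P) are finite points.\<close>

definition T_defined :: "(nat \<Rightarrow> real \<times> real) \<Rightarrow> nat \<Rightarrow> bool" where
  "T_defined V m \<longleftrightarrow> (\<forall>k<m.
      pjoin (vtx V m (k + m - 1)) (vtx V m (k + 1)) \<noteq> 0 \<and>
      pjoin (vtx V m k) (vtx V m (k + 2)) \<noteq> 0 \<and>
      pjoin (vtx V m (k + m - 1)) (vtx V m k) \<noteq> 0 \<and>
      pjoin (vtx V m (k + 1)) (vtx V m (k + 2)) \<noteq> 0 \<and>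
      diag_point V m k \<noteq> 0 \<and> side_point V m k \<noteq> 0 \<and>
      proj_normal V m k \<noteq> 0 \<and>
      T_vertex V m k $ 3 \<noteq> 0)"

definition horiz_side :: "(nat \<Rightarrow> real \<times> real) \<Rightarrow> nat \<Rightarrow> nat \<Rightarrow> bool" where
  "horiz_side V m k \<longleftrightarrow> snd (V (k mod m)) = snd (V ((k + 1) mod m))"

definition vert_side :: "(nat \<Rightarrow> real \<times> real) \<Rightarrow> nat \<Rightarrow> nat \<Rightarrow> bool" where
  "vert_side V m k \<longleftrightarrow> fst (V (k mod m)) = fst (V ((k + 1) mod m))"

text \<open>A projective line a x + b y + c z = 0 (homogeneous coordinates (a,b,c)) is a horizontal
affine line iff a = 0 and b \<noteq> 0; a vertical affine line iff b = 0 and a \<noteq> 0.\<close>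

definition horizontal_line :: "real^3 \<Rightarrow> bool" where
  "horizontal_line l \<longleftrightarrow> l $ 1 = 0 \<and> l $ 2 \<noteq> 0"

definition vertical_line :: "real^3 \<Rightarrow> bool" where
  "vertical_line l \<longleftrightarrow> l $ 2 = 0 \<and> l $ 1 \<noteq> 0"

end

theory Submission
  imports Defs
begin

text \<open>If side k of P is vertical, then its neighbouring sides k-1 and k+1 are horizontal, so
they are parallel and meet at the point at infinity (1 : 0 : 0) of the horizontal direction.
This point is the second point defining the projective normal n_k, and every line through
it is horizontal. Symmetrically for horizontal sides. That n_k is a genuine affine line is
forced by the finiteness of the vertex n_k \<inter> n_{k+1} of T(P).\<close>

lemma horiz_side_mod: "horiz_side V m (i mod m) = horiz_side V m i"
  by (simp add: horiz_side_def mod_Suc_eq)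

lemma vert_side_mod: "vert_side V m (i mod m) = vert_side V m i"
  by (simp add: vert_side_def mod_Suc_eq)

lemma not_horiz_and_vert_side:
  assumes "0 < m" and "\<forall>i<m. V i \<noteq> V ((i + 1) mod m)"
  shows "\<not> (horiz_side V m i \<and> vert_side V m i)"
proof -
  have "V (i mod m) \<noteq> V ((i mod m + 1) mod m)"
    using assms by simp
  then show ?thesis
    by (auto simp: horiz_side_def vert_side_def prod_eq_iff mod_Suc_eq)
qed

lemma alternating_sides:
  assumes "0 < m"
    and distinct: "\<forall>i<m. V i \<noteq> V ((i + 1) mod m)"
    and alternate: "\<forall>i<m. (horiz_side V m i \<and> vert_side V m (i + 1))
                        \<or> (vert_side V m i \<and> horiz_side V m (i + 1))"
  shows "horiz_side V m (i + 1) \<longleftrightarrow> vert_side V m i"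
    and "vert_side V m (i + 1) \<longleftrightarrow> horiz_side V m i"
proof -
  define j where "j = i mod m"
  have "horiz_side V m (j + 1) = horiz_side V m (i + 1)"
       "vert_side V m (j + 1) = vert_side V m (i + 1)"
    using horiz_side_mod[of V m "i + 1"] horiz_side_mod[of V m "j + 1"]
      vert_side_mod[of V m "i + 1"] vert_side_mod[of V m "j + 1"]
    by (simp_all add: j_def mod_Suc_eq)
  moreover have "horiz_side V m j = horiz_side V m i" "vert_side V m j = vert_side V m i"
    by (simp_all add: j_def horiz_side_mod vert_side_mod)
  moreover have "(horiz_side V m j \<and> vert_side V m (j + 1)) \<or> (vert_side V m j \<and> horiz_side V m (j + 1))"
    using alternate \<open>0 < m\<close> by (simp add: j_def)
  ultimately show "horiz_side V m (i + 1) \<longleftrightarrow> vert_side V m i"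
    and "vert_side V m (i + 1) \<longleftrightarrow> horiz_side V m i"
    using not_horiz_and_vert_side[OF \<open>0 < m\<close> distinct] by metis+
qed

lemma join_hom_same_snd: "snd A = snd B \<Longrightarrow> pjoin (hom A) (hom B) $ 1 = 0"
  by (simp add: pjoin_def cross3_def hom_def vector_3)

lemma join_hom_same_fst: "fst A = fst B \<Longrightarrow> pjoin (hom A) (hom B) $ 2 = 0"
  by (simp add: pjoin_def cross3_def hom_def vector_3)

lemma meet_horizontal_lines_at_infinity:
  "l $ 1 = 0 \<Longrightarrow> l' $ 1 = 0 \<Longrightarrow> pmeet l l' $ 2 = 0 \<and> pmeet l l' $ 3 = 0"
  by (simp add: pmeet_def cross3_def vector_3)

lemma meet_vertical_lines_at_infinity:
  "l $ 2 = 0 \<Longrightarrow> l' $ 2 = 0 \<Longrightarrow> pmeet l l' $ 1 = 0 \<and> pmeet l l' $ 3 = 0"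
  by (simp add: pmeet_def cross3_def vector_3)

lemma join_horizontal_point_at_infinity: "p $ 2 = 0 \<Longrightarrow> p $ 3 = 0 \<Longrightarrow> pjoin q p $ 1 = 0"
  by (simp add: pjoin_def cross3_def vector_3)

lemma join_vertical_point_at_infinity: "p $ 1 = 0 \<Longrightarrow> p $ 3 = 0 \<Longrightarrow> pjoin q p $ 2 = 0"
  by (simp add: pjoin_def cross3_def vector_3)

lemma neighbour_side_lines:
  assumes "0 < m"
  shows "pjoin (vtx V m (k + m - 1)) (vtx V m k)
           = pjoin (hom (V ((k + m - 1) mod m))) (hom (V ((k + m - 1 + 1) mod m)))"
    and "pjoin (vtx V m (k + 1)) (vtx V m (k + 2))
           = pjoin (hom (V ((k + 1) mod m))) (hom (V ((k + 1 + 1) mod m)))"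
  using assms by (simp_all add: vtx_def)

lemma proj_normal_horizontal_direction:
  assumes "0 < m" and "horiz_side V m (k + m - 1)" and "horiz_side V m (k + 1)"
  shows "proj_normal V m k $ 1 = 0"
proof -
  have "side_point V m k $ 2 = 0 \<and> side_point V m k $ 3 = 0"
    unfolding side_point_def neighbour_side_lines[OF \<open>0 < m\<close>]
    using assms(2,3)
    by (intro meet_horizontal_lines_at_infinity join_hom_same_snd) (simp_all add: horiz_side_def)
  then show ?thesis
    unfolding proj_normal_def by (simp add: join_horizontal_point_at_infinity)
qed

lemma proj_normal_vertical_direction:
  assumes "0 < m" and "vert_side V m (k + m - 1)" and "vert_side V m (k + 1)"
  shows "proj_normal V m k $ 2 = 0"
proof -
  have "side_point V m k $ 1 = 0 \<and> side_point V m k $ 3 = 0"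
    unfolding side_point_def neighbour_side_lines[OF \<open>0 < m\<close>]
    using assms(2,3)
    by (intro meet_vertical_lines_at_infinity join_hom_same_fst) (simp_all add: vert_side_def)
  then show ?thesis
    unfolding proj_normal_def by (simp add: join_vertical_point_at_infinity)
qed

lemma proj_normal_affine:
  assumes "T_defined V m" and "k < m"
  shows "proj_normal V m k $ 1 \<noteq> 0 \<or> proj_normal V m k $ 2 \<noteq> 0"
proof -
  have "T_vertex V m k $ 3 \<noteq> 0"
    using assms unfolding T_defined_def by blast
  then show ?thesis
    using \<open>k < m\<close> by (auto simp: T_vertex_def pmeet_def cross3_def vector_3)
qed

theorem mainTheorem11:
  fixes V :: "nat \<Rightarrow> real \<times> real" and n :: nat
  assumes "n \<ge> 2"
    and "\<forall>k<2*n. V k \<noteq> V ((k + 1) mod (2*n))"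
    and "\<forall>k<2*n. (horiz_side V (2*n) k \<and> vert_side V (2*n) (k + 1))
                 \<or> (vert_side V (2*n) k \<and> horiz_side V (2*n) (k + 1))"
    and "T_defined V (2*n)"
  shows "\<forall>k<2*n. (vert_side V (2*n) k \<longrightarrow> horizontal_line (proj_normal V (2*n) k))
               \<and> (horiz_side V (2*n) k \<longrightarrow> vertical_line (proj_normal V (2*n) k))"
proof (intro allI impI conjI)
  fix k assume "k < 2*n"
  have pos: "0 < 2*n" using assms(1) by simp
  note alt = alternating_sides[OF pos assms(2,3)]
  have prev: "horiz_side V (2*n) (k + 2*n - 1) \<longleftrightarrow> vert_side V (2*n) k"
              "vert_side V (2*n) (k + 2*n - 1) \<longleftrightarrow> horiz_side V (2*n) k"
    using alt[of "k + 2*n - 1"] pos vert_side_mod[of V "2*n" "k + 2*n"]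
      horiz_side_mod[of V "2*n" "k + 2*n"] vert_side_mod[of V "2*n" k] horiz_side_mod[of V "2*n" k]
    by simp_all
  have affine: "proj_normal V (2*n) k $ 1 \<noteq> 0 \<or> proj_normal V (2*n) k $ 2 \<noteq> 0"
    using proj_normal_affine[OF assms(4) \<open>k < 2*n\<close>] .
  show "horizontal_line (proj_normal V (2*n) k)" if "vert_side V (2*n) k"
    using proj_normal_horizontal_direction[OF pos] affine prev alt that
    by (simp add: horizontal_line_def)
  show "vertical_line (proj_normal V (2*n) k)" if "horiz_side V (2*n) k"
    using proj_normal_vertical_direction[OF pos] affine prev alt that
    by (simp add: vertical_line_def)
qed

end
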